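(* Consider two stochastic systems $\Sigma_1$ and $\Sigma_2$ as described in the context. If $\Sigma_1$ and $\Sigma_2$ have equivalent stochastic external behavior with respect to some subspace relation $\mathcal{R}\subseteq\mathbb{R}^{n_1}\times\mathbb{R}^{n_2}$, then the following conditions hold: \[ \begin{aligned} & p_1') & & \operatorname{im}\begin{bmatrix} B_1 \\ B_2 \end{bmatrix} \subseteq \ker\begin{bmatrix} Q_{1,\tilde n} & -Q_{2,\tilde n} \end{bmatrix},\\ & p_2') & & \operatorname{im}\begin{bmatrix} G_1\mu_1 \\ G_2\mu_2 \end{bmatrix} \subseteq \ker\begin{bmatrix} Q_{1,\tilde n} & -Q_{2,\tilde n} \end{bmatrix},\\ & p_3') & & \exists H\in \mathbb{R}^{l_1\times l_2}: \ \operatorname{im}\begin{bmatrix} G_1 H \\ G_2 \end{bmatrix} \subseteq \ker\begin{bmatrix} Q_{1,\tilde n} & -Q_{2,\tilde n} \end{bmatrix}. \end{aligned} \]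
   Context: For $i=1,2$, $\Sigma_i$ is the discrete-time stochastic linear control system $x_i(t+1)=A_i x_i(t)+B_i u_i(t)+G_i w_i(t)$, $y_i(t)=C_i x_i(t)+\nu_i(t)$, $t\in\mathbb{N}$, with $x_i\in\mathbb{R}^{n_i}$, $u_i\in\mathbb{R}^m$, $w_i\in\mathbb{R}^{l_i}$, $y_i,\nu_i\in\mathbb{R}^p$; $w_i(t)\sim\mathcal{N}(\mu_i,I_{l_i})$ and $\nu_i(t)\sim\mathcal{N}(0,\Psi_i)$ are white, mutually independent sequences. Let $\tilde n=n_1+n_2$ and $Q_{i,k}=\begin{bmatrix} C_i^T & (C_iA_i)^T & \cdots & (C_iA_i^{k-1})^T\end{bmatrix}^T$ (the $k$-step observability matrix of $(A_i,C_i)$). For an initial state $x_i^0$ and a deterministic input sequence $\mathbf{u}$, let $\mathbf{y}_i|_{x_i^0,\mathbf{u}}$ denote the resulting output stochastic process. $\Sigma_1$ and $\Sigma_2$ have equivalent stochastic external behavior with respect to a subspace $\mathcal{R}\subseteq\mathbb{R}^{n_1}\times\mathbb{R}^{n_2}$ if for every $(x_1^0,x_2^0)\in\mathcal{R}$ and every input $\mathbf{u}$, the processes $\mathbf{y}_1|_{x_1^0,\mathbf{u}}$ and $\mathbf{y}_2|_{x_2^0,\mathbf{u}}$ are stochastically equivalent (all finite-dimensional joint distributions coincide). *)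

theory Defs
  imports "HOL-Analysis.Analysis" "HOL-Probability.Probability"
begin

primrec mat_pow :: "real^'n^'n \<Rightarrow> nat \<Rightarrow> real^'n^'n" where
  "mat_pow A 0 = mat 1"
| "mat_pow A (Suc k) = A ** mat_pow A k"

text \<open>The k-step observability matrix Q_k of (A,C), applied to x: the stacked vector
  [C x; C A x; ...; C A^(k-1) x], represented as a function of the block index
  (blocks with index \<ge> k are set to 0).\<close>
definition obs_map :: "real^'n^'p \<Rightarrow> real^'n^'n \<Rightarrow> nat \<Rightarrow> real^'n \<Rightarrow> nat \<Rightarrow> real^'p" where
  "obs_map C A k x = (\<lambda>j. if j < k then C *v (mat_pow A j *v x) else 0)"

definition obs_ker ::
  "real^'n1^'p \<Rightarrow> real^'n1^'n1 \<Rightarrow> real^'n2^'p \<Rightarrow> real^'n2^'n2 \<Rightarrow> nat \<Rightarrow> ((real^'n1) \<times> (real^'n2)) set" where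
  "obs_ker C1 A1 C2 A2 k = {(x1, x2). obs_map C1 A1 k x1 = obs_map C2 A2 k x2}"

definition normal_measure :: "real \<Rightarrow> real \<Rightarrow> real measure" where
  "normal_measure m v = (if v = 0 then return borel m else density lborel (normal_density m (sqrt v)))"

definition gaussian_vec :: "'a measure \<Rightarrow> ('a \<Rightarrow> real^'l) \<Rightarrow> real^'l \<Rightarrow> real^'l^'l \<Rightarrow> bool" where
  "gaussian_vec M X m S \<longleftrightarrow>
     transpose S = S \<and> (\<forall>a. 0 \<le> a \<bullet> (S *v a)) \<and>
     X \<in> borel_measurable M \<and>
     (\<forall>a. distr M borel (\<lambda>\<omega>. a \<bullet> X \<omega>) = normal_measure (a \<bullet> m) (a \<bullet> (S *v a)))"

text \<open>Noise assumptions of a system on probability space M: w(t) ~ N(mu, I), nu(t) ~ N(0, Psi),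
  and the whole family {w(t), nu(t) : t} is mutually independent (so both sequences are
  white and independent of each other); each variable is embedded into the common space
  R^l x R^p to state this as one independent family indexed by nat + nat.\<close>
definition noise_ok :: "'a measure \<Rightarrow> (nat \<Rightarrow> 'a \<Rightarrow> real^'l) \<Rightarrow> real^'l \<Rightarrow>
    (nat \<Rightarrow> 'a \<Rightarrow> real^'p) \<Rightarrow> real^'p^'p \<Rightarrow> bool" where
  "noise_ok M w mu nu Psi \<longleftrightarrow>
     prob_space M \<and>
     (\<forall>t. gaussian_vec M (w t) mu (mat 1)) \<and>
     (\<forall>t. gaussian_vec M (nu t) 0 Psi) \<and>
     prob_space.indep_vars M (\<lambda>_. borel)
       (\<lambda>i \<omega>. case i of Inl t \<Rightarrow> (w t \<omega>, 0) | Inr t \<Rightarrow> (0, nu t \<omega>)) UNIV"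

primrec state_traj :: "real^'n^'n \<Rightarrow> real^'m^'n \<Rightarrow> real^'l^'n \<Rightarrow> real^'n \<Rightarrow>
    (nat \<Rightarrow> real^'m) \<Rightarrow> (nat \<Rightarrow> 'a \<Rightarrow> real^'l) \<Rightarrow> nat \<Rightarrow> 'a \<Rightarrow> real^'n" where
  "state_traj A B G x0 u w 0 = (\<lambda>\<omega>. x0)"
| "state_traj A B G x0 u w (Suc t) =
     (\<lambda>\<omega>. A *v state_traj A B G x0 u w t \<omega> + B *v u t + G *v w t \<omega>)"

definition output_proc :: "real^'n^'n \<Rightarrow> real^'m^'n \<Rightarrow> real^'l^'n \<Rightarrow> real^'n^'p \<Rightarrow> real^'n \<Rightarrow>
    (nat \<Rightarrow> real^'m) \<Rightarrow> (nat \<Rightarrow> 'a \<Rightarrow> real^'l) \<Rightarrow> (nat \<Rightarrow> 'a \<Rightarrow> real^'p) \<Rightarrow> nat \<Rightarrow> 'a \<Rightarrow> real^'p" where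
  "output_proc A B G C x0 u w nu t = (\<lambda>\<omega>. C *v state_traj A B G x0 u w t \<omega> + nu t \<omega>)"

definition stoch_equiv :: "'a measure \<Rightarrow> (nat \<Rightarrow> 'a \<Rightarrow> 'c::topological_space) \<Rightarrow>
    'b measure \<Rightarrow> (nat \<Rightarrow> 'b \<Rightarrow> 'c) \<Rightarrow> bool" where
  "stoch_equiv M1 Y1 M2 Y2 \<longleftrightarrow>
     (\<forall>(k::nat) (ts::nat \<Rightarrow> nat).
        distr M1 (Pi\<^sub>M {..<k} (\<lambda>_. borel)) (\<lambda>\<omega>. restrict (\<lambda>j. Y1 (ts j) \<omega>) {..<k}) =
        distr M2 (Pi\<^sub>M {..<k} (\<lambda>_. borel)) (\<lambda>\<omega>. restrict (\<lambda>j. Y2 (ts j) \<omega>) {..<k}))"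

end

theory Submission
  imports Defs
begin

text \<open>Since \<open>R\<close> is a subspace it contains \<open>(0, 0)\<close>, so the outputs started from zero states are
  stochastically equivalent for every input. Equality of their means for all inputs gives equal
  Markov parameters \<open>C\<^sub>1 A\<^sub>1\<^sup>j B\<^sub>1 = C\<^sub>2 A\<^sub>2\<^sup>j B\<^sub>2\<close> (impulse inputs) and
  \<open>C\<^sub>1 A\<^sub>1\<^sup>j G\<^sub>1 \<mu>\<^sub>1 = C\<^sub>2 A\<^sub>2\<^sup>j G\<^sub>2 \<mu>\<^sub>2\<close> (zero input). Equality of the output covariances, which are
  built from the independent Gaussian noise, gives after differencing in time equal Gram matrices
  \<open>K\<^sub>1(t) K\<^sub>1(s)\<^sup>T = K\<^sub>2(t) K\<^sub>2(s)\<^sup>T\<close> for \<open>K\<^sub>i(j) = C\<^sub>i A\<^sub>i\<^sup>j G\<^sub>i\<close>. Two families with equal Gram matrices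
  differ by a common linear map acting from the right, and that map is \<open>H\<close>.\<close>

section \<open>Linear algebra\<close>

lemma inner_vector_matrix_mult: "(a v* X) \<bullet> (b v* Y) = (a::real^'m) \<bullet> ((X ** transpose Y) *v b)"
  by (metis dot_lmul_matrix vector_transpose_matrix transpose_transpose matrix_vector_mul_assoc)

lemma vector_matrix_mult_eq: "(\<And>c. c v* X = c v* Y) \<Longrightarrow> X = (Y::real^'n^'m)"
  by (metis matrix_eq transpose_transpose vector_transpose_matrix)

lemma matrix_eq_inner:
  fixes X Y :: "real^'n^'m"
  assumes "\<And>a b. a \<bullet> (X *v b) = a \<bullet> (Y *v b)"
  shows "X = Y"
  using assms by (metis matrix_eq vector_eq_ldot)

lemma sum_matrix_vector_mult: "(\<Sum>i\<in>I. X i) *v v = (\<Sum>i\<in>I. X i *v v)"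
  by (induction I rule: infinite_finite_induct) (simp_all add: matrix_vector_mult_add_rdistrib)

lemma linear_factor_through_kernel:
  fixes F1 :: "'a::euclidean_space \<Rightarrow> 'b::euclidean_space" and F2 :: "'a \<Rightarrow> 'c::euclidean_space"
  assumes l1: "linear F1" and l2: "linear F2" and ker: "\<And>x. F1 x = 0 \<Longrightarrow> F2 x = 0"
  shows "\<exists>T. linear T \<and> (\<forall>x. T (F1 x) = F2 x)"
proof -
  \<comment> \<open>\<open>T\<close> is \<open>F2\<close> after a left inverse of \<open>F1\<close> on the orthogonal complement of \<open>ker F1\<close>.\<close>
  define K where "K = {x. F1 x = 0}"
  define V where "V = {y. \<forall>x\<in>K. orthogonal x y}"
  have sK: "subspace K" unfolding K_def using l1 by (simp add: linear_subspace_kernel)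
  have sV: "subspace V" unfolding V_def by (rule subspace_orthogonal_to_vectors)
  have "inj_on F1 V"
  proof (rule linear_inj_on_iff_eq_0[THEN iffD2, OF l1 sV], intro ballI impI)
    fix z assume "z \<in> V" "F1 z = 0"
    then have "z \<in> K" "orthogonal z z" unfolding K_def V_def by auto
    then show "z = 0" by (simp add: orthogonal_def)
  qed
  then obtain g where g: "linear g" "\<forall>v\<in>V. g (F1 v) = v"
    using linear_exists_left_inverse_on[OF l1 sV] by blast
  show ?thesis
  proof (intro exI conjI allI)
    show "linear (F2 \<circ> g)" using g l2 by (simp add: linear_compose)
    fix x
    obtain y z where yz: "y \<in> span K" "\<And>v. v \<in> span K \<Longrightarrow> orthogonal z v" "x = y + z"
      using orthogonal_subspace_decomp_exists by blast
    have yK: "y \<in> K" using yz(1) sK span_eq_iff by blast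
    have zV: "z \<in> V" unfolding V_def using yz(2) span_base orthogonal_commute by blast
    have "F1 x = F1 z" using yz(3) yK l1 unfolding K_def by (simp add: linear_add)
    then have "(F2 \<circ> g) (F1 x) = F2 z" using g zV by simp
    also have "\<dots> = F2 x" using yz(3) yK ker l2 unfolding K_def by (simp add: linear_add)
    finally show "(F2 \<circ> g) (F1 x) = F2 x" .
  qed
qed

lemma gram_eq_imp_right_factor:
  fixes K1 :: "'k::finite \<Rightarrow> real^'l1^'p" and K2 :: "'k \<Rightarrow> real^'l2^'p"
  assumes gram: "\<And>s t. K1 s ** transpose (K1 t) = K2 s ** transpose (K2 t)"
  shows "\<exists>H. \<forall>k. K1 k ** H = K2 k"
proof -
  define F1 where "F1 x = (\<Sum>k\<in>UNIV. x $ k v* K1 k)" for x :: "real^'p^'k"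
  define F2 where "F2 x = (\<Sum>k\<in>UNIV. x $ k v* K2 k)" for x :: "real^'p^'k"
  have lin: "linear F1" "linear F2"
    unfolding F1_def F2_def
    by (rule linearI; simp add: transpose_matrix_vector[symmetric] matrix_vector_right_distrib
        sum.distrib matrix_vector_mult_scaleR scaleR_sum_right del: transpose_matrix_vector)+
  \<comment> \<open>equal Gram matrices make \<open>F1\<close> and \<open>F2\<close> equally long, so \<open>ker F1 \<subseteq> ker F2\<close>\<close>
  have "F1 x \<bullet> F1 x = F2 x \<bullet> F2 x" for x
    unfolding F1_def F2_def inner_sum_left inner_sum_right inner_vector_matrix_mult gram ..
  then obtain T where T: "linear T" "\<And>x. T (F1 x) = F2 x"
    using linear_factor_through_kernel[OF lin] by (metis inner_eq_zero_iff)
  have single: "(if i = k then c else 0) v* X = (if i = k then c v* X else 0)"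
    for i k c and X :: "real^'l^'p" by simp
  have F_single: "F1 (\<chi> i. if i = k then c else 0) = c v* K1 k"
    "F2 (\<chi> i. if i = k then c else 0) = c v* K2 k" for k c
    unfolding F1_def F2_def vec_lambda_beta single by simp_all
  show ?thesis
  proof (intro exI allI vector_matrix_mult_eq)
    fix k c
    have "c v* (K1 k ** transpose (matrix T)) = T (c v* K1 k)"
      using T(1) by (simp add: vector_matrix_mul_assoc[symmetric])
    also have "\<dots> = c v* K2 k"
      using T(2) F_single[of k c] by metis
    finally show "c v* (K1 k ** transpose (matrix T)) = c v* K2 k" .
  qed
qed

section \<open>Moments of Gaussian vectors\<close>

lemma normal_measure_moments:
  assumes "0 \<le> v"
  shows "integrable (normal_measure m v) (\<lambda>x. x)" "(\<integral>x. x \<partial>normal_measure m v) = m"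
    and "integrable (normal_measure m v) (\<lambda>x. x\<^sup>2)" "(\<integral>x. x\<^sup>2 \<partial>normal_measure m v) = v + m\<^sup>2"
proof -
  have "integrable (normal_measure m v) (\<lambda>x. x) \<and> (\<integral>x. x \<partial>normal_measure m v) = m \<and>
    integrable (normal_measure m v) (\<lambda>x. x\<^sup>2) \<and> (\<integral>x. x\<^sup>2 \<partial>normal_measure m v) = v + m\<^sup>2"
  proof (cases "v = 0")
    case True
    then show ?thesis
      by (simp add: normal_measure_def integral_return integrable_iff_bounded nn_integral_return)
  next
    case False
    define s where "s = sqrt v"
    have s: "0 < s" and v: "v = s\<^sup>2" using assms False by (simp_all add: s_def)
    let ?f = "normal_density m s"
    have sq: "(\<lambda>x. ?f x * x\<^sup>2) = (\<lambda>x. ?f x * (x - m)\<^sup>2 + 2 * m * (?f x * x) - m\<^sup>2 * ?f x)"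
      by (auto simp: fun_eq_iff power2_eq_square algebra_simps)
    have i1: "integrable lborel (\<lambda>x. ?f x * x)" and e1: "(\<integral>x. ?f x * x \<partial>lborel) = m"
      using integrable_normal_moment_nz_1[OF s] integral_normal_moment_nz_1[OF s] by auto
    have i2: "integrable lborel (\<lambda>x. ?f x * (x - m)\<^sup>2)"
      and e2: "(\<integral>x. ?f x * (x - m)\<^sup>2 \<partial>lborel) = s\<^sup>2"
      using integrable_normal_moment[OF s, of m 2] integral_normal_moment_even[OF s, of m 1]
      by (simp_all add: power2_eq_square)
    have "integrable lborel (\<lambda>x. ?f x * x\<^sup>2)"
      unfolding sq using i1 i2 integrable_normal_density[OF s]
      by (intro Bochner_Integration.integrable_diff Bochner_Integration.integrable_add
          integrable_mult_right) auto
    moreover have "(\<integral>x. ?f x * x\<^sup>2 \<partial>lborel) = v + m\<^sup>2"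
      unfolding sq using i1 e1 i2 e2 v integrable_normal_density[OF s] integral_normal_density[OF s]
      by (simp add: power2_eq_square)
    ultimately show ?thesis
      using False i1 e1 by (simp add: normal_measure_def s_def integrable_density integral_density)
  qed
  then show "integrable (normal_measure m v) (\<lambda>x. x)" "(\<integral>x. x \<partial>normal_measure m v) = m"
    "integrable (normal_measure m v) (\<lambda>x. x\<^sup>2)" "(\<integral>x. x\<^sup>2 \<partial>normal_measure m v) = v + m\<^sup>2"
    by auto
qed

lemma gaussian_vec_moments:
  assumes "gaussian_vec M X m S"
  shows "integrable M (\<lambda>\<omega>. a \<bullet> X \<omega>)" "(\<integral>\<omega>. a \<bullet> X \<omega> \<partial>M) = a \<bullet> m"
    and "integrable M (\<lambda>\<omega>. (a \<bullet> X \<omega>)\<^sup>2)" "(\<integral>\<omega>. (a \<bullet> X \<omega>)\<^sup>2 \<partial>M) = a \<bullet> (S *v a) + (a \<bullet> m)\<^sup>2"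
proof -
  have [measurable]: "X \<in> borel_measurable M" and pos: "0 \<le> a \<bullet> (S *v a)"
    and distr: "distr M borel (\<lambda>\<omega>. a \<bullet> X \<omega>) = normal_measure (a \<bullet> m) (a \<bullet> (S *v a))"
    using assms unfolding gaussian_vec_def by auto
  have meas: "(\<lambda>\<omega>. a \<bullet> X \<omega>) \<in> borel_measurable M" by measurable
  have int: "integrable M (\<lambda>\<omega>. f (a \<bullet> X \<omega>)) = integrable (normal_measure (a \<bullet> m) (a \<bullet> (S *v a))) f"
    and eq: "(\<integral>\<omega>. f (a \<bullet> X \<omega>) \<partial>M) = (\<integral>x. f x \<partial>normal_measure (a \<bullet> m) (a \<bullet> (S *v a)))"
    if "f \<in> borel_measurable borel" for f :: "real \<Rightarrow> real"
    using integrable_distr_eq[OF meas that] integral_distr[OF meas that] distr by auto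
  have id: "(\<lambda>x::real. x) \<in> borel_measurable borel" and sq: "(\<lambda>x::real. x\<^sup>2) \<in> borel_measurable borel"
    by auto
  note normal = normal_measure_moments[OF pos, of "a \<bullet> m"]
  show "integrable M (\<lambda>\<omega>. a \<bullet> X \<omega>)" "(\<integral>\<omega>. a \<bullet> X \<omega> \<partial>M) = a \<bullet> m"
    using int[OF id] eq[OF id] normal(1,2) by simp_all
  show "integrable M (\<lambda>\<omega>. (a \<bullet> X \<omega>)\<^sup>2)" "(\<integral>\<omega>. (a \<bullet> X \<omega>)\<^sup>2 \<partial>M) = a \<bullet> (S *v a) + (a \<bullet> m)\<^sup>2"
    using int[OF sq] eq[OF sq] normal(3,4) by simp_all
qed

lemma gaussian_vec_cross_moment:
  assumes "gaussian_vec M X m S"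
  shows "integrable M (\<lambda>\<omega>. (a \<bullet> X \<omega>) * (b \<bullet> X \<omega>))"
    and "(\<integral>\<omega>. (a \<bullet> X \<omega>) * (b \<bullet> X \<omega>) \<partial>M) = a \<bullet> (S *v b) + (a \<bullet> m) * (b \<bullet> m)"
proof -
  have sym: "b \<bullet> (S *v a) = a \<bullet> (S *v b)"
    using assms unfolding gaussian_vec_def by (metis dot_lmul_matrix vector_transpose_matrix inner_commute)
  have polar: "(\<lambda>\<omega>. (a \<bullet> X \<omega>) * (b \<bullet> X \<omega>)) =
      (\<lambda>\<omega>. (((a + b) \<bullet> X \<omega>)\<^sup>2 - (a \<bullet> X \<omega>)\<^sup>2 - (b \<bullet> X \<omega>)\<^sup>2) / 2)"
    by (simp add: fun_eq_iff inner_add_left power2_eq_square algebra_simps)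
  note moments = gaussian_vec_moments[OF assms]
  show "integrable M (\<lambda>\<omega>. (a \<bullet> X \<omega>) * (b \<bullet> X \<omega>))"
    unfolding polar using moments(3) by simp
  have "(\<integral>\<omega>. ((a + b) \<bullet> X \<omega>)\<^sup>2 - (a \<bullet> X \<omega>)\<^sup>2 - (b \<bullet> X \<omega>)\<^sup>2 \<partial>M)
      = ((a + b) \<bullet> (S *v (a + b)) + ((a + b) \<bullet> m)\<^sup>2) - (a \<bullet> (S *v a) + (a \<bullet> m)\<^sup>2)
        - (b \<bullet> (S *v b) + (b \<bullet> m)\<^sup>2)"
    using moments(3,4) by simp
  also have "\<dots> = 2 * (a \<bullet> (S *v b) + (a \<bullet> m) * (b \<bullet> m))"
    using sym by (simp add: inner_add_left inner_add_right matrix_vector_right_distrib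
        power2_eq_square algebra_simps)
  finally show "(\<integral>\<omega>. (a \<bullet> X \<omega>) * (b \<bullet> X \<omega>) \<partial>M) = a \<bullet> (S *v b) + (a \<bullet> m) * (b \<bullet> m)"
    unfolding polar by simp
qed

lemma (in prob_space) indep_vars_integral_mult:
  fixes Z :: "'i \<Rightarrow> 'a \<Rightarrow> 'x::topological_space" and f g :: "'x \<Rightarrow> real"
  assumes "indep_vars (\<lambda>_. borel) Z UNIV" and "i \<noteq> j"
    and "f \<in> borel_measurable borel" "g \<in> borel_measurable borel"
    and "integrable M (\<lambda>\<omega>. f (Z i \<omega>))" "integrable M (\<lambda>\<omega>. g (Z j \<omega>))"
  shows "integrable M (\<lambda>\<omega>. f (Z i \<omega>) * g (Z j \<omega>))"
    and "(\<integral>\<omega>. f (Z i \<omega>) * g (Z j \<omega>) \<partial>M) = (\<integral>\<omega>. f (Z i \<omega>) \<partial>M) * (\<integral>\<omega>. g (Z j \<omega>) \<partial>M)"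
proof -
  define Y where "Y k = (if k = i then f else g)" for k
  have indep: "indep_vars (\<lambda>_. borel) (\<lambda>k \<omega>. Y k (Z k \<omega>)) {i, j}"
    by (rule indep_vars_compose2[OF indep_vars_subset[OF assms(1)]]) (auto simp: Y_def assms)
  have int: "\<And>k. k \<in> {i, j} \<Longrightarrow> integrable M (\<lambda>\<omega>. Y k (Z k \<omega>))"
    using assms by (auto simp: Y_def)
  show "integrable M (\<lambda>\<omega>. f (Z i \<omega>) * g (Z j \<omega>))"
    using indep_vars_integrable[OF _ indep int] \<open>i \<noteq> j\<close> by (simp add: Y_def)
  show "(\<integral>\<omega>. f (Z i \<omega>) * g (Z j \<omega>) \<partial>M) = (\<integral>\<omega>. f (Z i \<omega>) \<partial>M) * (\<integral>\<omega>. g (Z j \<omega>) \<partial>M)"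
    using indep_vars_lebesgue_integral[OF _ indep int] \<open>i \<noteq> j\<close> by (simp add: Y_def)
qed

lemma borel_measurable_matrix_vector_mult[measurable]:
  assumes "f \<in> borel_measurable M"
  shows "(\<lambda>x. (X::real^'n^'m) *v f x) \<in> borel_measurable M"
proof -
  have "continuous_on UNIV ((*v) X)"
    by (rule linear_continuous_on) (simp add: linear_conv_bounded_linear[symmetric])
  then show ?thesis
    using measurable_compose[OF assms borel_measurable_continuous_onI] by blast
qed

lemma borel_measurable_inner_fst: "(\<lambda>z. a \<bullet> fst z) \<in> borel_measurable borel"
  and borel_measurable_inner_snd: "(\<lambda>z. b \<bullet> snd z) \<in> borel_measurable borel"
  by (intro borel_measurable_continuous_onI continuous_intros)+

section \<open>Markov parameters and output statistics\<close>

definition markov_param :: "real^'n^'p \<Rightarrow> real^'n^'n \<Rightarrow> real^'m^'n \<Rightarrow> nat \<Rightarrow> real^'m^'p" where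
  "markov_param C A B j = C ** mat_pow A j ** B"

lemma markov_param_mult_vec: "markov_param C A B j *v v = C *v (mat_pow A j *v (B *v v))"
  by (simp add: markov_param_def matrix_vector_mul_assoc matrix_mul_assoc)

lemma state_traj_closed_form:
  "state_traj A B G x0 u w t \<omega> =
     mat_pow A t *v x0 + (\<Sum>r<t. mat_pow A (t - Suc r) *v (B *v u r + G *v w r \<omega>))"
proof (induction t)
  case 0
  then show ?case by (simp add: matrix_vector_mul_lid)
next
  case (Suc t)
  have "(\<Sum>r<t. mat_pow A (t - r) *v (B *v u r + G *v w r \<omega>))
      = (\<Sum>r<t. A *v (mat_pow A (t - Suc r) *v (B *v u r + G *v w r \<omega>)))"
    by (intro sum.cong refl) (simp add: Suc_diff_Suc[symmetric] matrix_vector_mul_assoc)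
  also have "\<dots> = A *v (\<Sum>r<t. mat_pow A (t - Suc r) *v (B *v u r + G *v w r \<omega>))"
    by (rule linear_sum[OF matrix_vector_mul_linear, symmetric])
  finally show ?case
    using Suc by (simp add: matrix_vector_mul_assoc matrix_vector_right_distrib
        matrix_vector_mul_lid algebra_simps)
qed

lemma output_proc_closed_form:
  "output_proc A B G C x0 u w nu t \<omega> = C *v (mat_pow A t *v x0) +
     (\<Sum>r<t. markov_param C A B (t - Suc r) *v u r + markov_param C A G (t - Suc r) *v w r \<omega>) +
     nu t \<omega>"
  unfolding output_proc_def state_traj_closed_form
  by (simp add: linear_sum[OF matrix_vector_mul_linear] matrix_vector_right_distrib
      markov_param_mult_vec)

definition output_mean ::
    "real^'n^'n \<Rightarrow> real^'m^'n \<Rightarrow> real^'l^'n \<Rightarrow> real^'n^'p \<Rightarrow> real^'l \<Rightarrow> (nat \<Rightarrow> real^'m) \<Rightarrow> nat \<Rightarrow> real^'p"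
  where "output_mean A B G C mu u t =
    (\<Sum>r<t. markov_param C A B (t - Suc r) *v u r + markov_param C A G (t - Suc r) *v mu)"

definition output_cov :: "real^'n^'n \<Rightarrow> real^'l^'n \<Rightarrow> real^'n^'p \<Rightarrow> real^'p^'p \<Rightarrow> nat \<Rightarrow> nat \<Rightarrow> real^'p^'p"
  where "output_cov A G C Psi t s =
    (\<Sum>r<min t s. markov_param C A G (t - Suc r) ** transpose (markov_param C A G (s - Suc r))) +
    (if t = s then Psi else 0)"

lemma output_mean_Suc:
  "output_mean A B G C mu u (Suc t) =
     markov_param C A B t *v u 0 + markov_param C A G t *v mu + output_mean A B G C mu (\<lambda>r. u (Suc r)) t"
  unfolding output_mean_def sum.lessThan_Suc_shift by simp

lemma output_cov_Suc:
  "output_cov A G C Psi (Suc t) (Suc s) =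
     markov_param C A G t ** transpose (markov_param C A G s) + output_cov A G C Psi t s"
  unfolding output_cov_def min_Suc_Suc sum.lessThan_Suc_shift by simp

lemma markov_params_eq_if_output_means_eq:
  assumes means: "\<And>u t. output_mean A1 B1 G1 C1 mu1 u t = output_mean A2 B2 G2 C2 mu2 u t"
  shows "markov_param C1 A1 G1 j *v mu1 = markov_param C2 A2 G2 j *v mu2"
    and "markov_param C1 A1 B1 j = markov_param C2 A2 B2 j"
proof -
  show drift: "markov_param C1 A1 G1 j *v mu1 = markov_param C2 A2 G2 j *v mu2"
    using means[of "\<lambda>_. 0" "Suc j"] means[of "\<lambda>_. 0" j] by (simp add: output_mean_Suc)
  have "markov_param C1 A1 B1 j *v v = markov_param C2 A2 B2 j *v v" for v
    using means[of "\<lambda>r. if r = 0 then v else 0" "Suc j"] means[of "\<lambda>_. 0" j] drift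
    by (simp add: output_mean_Suc)
  then show "markov_param C1 A1 B1 j = markov_param C2 A2 B2 j"
    by (simp add: matrix_eq)
qed

lemma markov_gram_eq_if_output_covs_eq:
  assumes "\<And>t s. output_cov A1 G1 C1 Psi1 t s = output_cov A2 G2 C2 Psi2 t s"
  shows "markov_param C1 A1 G1 t ** transpose (markov_param C1 A1 G1 s) =
    markov_param C2 A2 G2 t ** transpose (markov_param C2 A2 G2 s)"
  using assms[of "Suc t" "Suc s"] assms[of t s] by (simp add: output_cov_Suc)

lemma sum_lessThan_if_less:
  fixes t s :: nat
  shows "(\<Sum>r<t. if r < s then f r else 0) = (\<Sum>r<min t s. f r)"
proof -
  have "{r \<in> {..<t}. r < s} = {..<min t s}" by (auto simp: min_def)
  then show ?thesis by (simp add: sum.inter_filter[symmetric])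
qed

locale gaussian_noise =
  fixes M :: "'a measure" and w :: "nat \<Rightarrow> 'a \<Rightarrow> real^'l" and mu :: "real^'l"
    and nu :: "nat \<Rightarrow> 'a \<Rightarrow> real^'p" and Psi :: "real^'p^'p"
  assumes noise_ok: "noise_ok M w mu nu Psi"
begin

sublocale prob_space M
  using noise_ok by (simp add: noise_ok_def)

definition noise_family :: "nat + nat \<Rightarrow> 'a \<Rightarrow> (real^'l) \<times> (real^'p)" where
  "noise_family i \<omega> = (case i of Inl t \<Rightarrow> (w t \<omega>, 0) | Inr t \<Rightarrow> (0, nu t \<omega>))"

lemma indep_noise_family: "indep_vars (\<lambda>_. borel) noise_family UNIV"
  using noise_ok unfolding noise_ok_def noise_family_def by simp

lemma gaussian_w: "gaussian_vec M (w t) mu (mat 1)"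
  and gaussian_nu: "gaussian_vec M (nu t) 0 Psi"
  using noise_ok unfolding noise_ok_def by auto

lemma measurable_w[measurable]: "w t \<in> borel_measurable M"
  and measurable_nu[measurable]: "nu t \<in> borel_measurable M"
  using gaussian_w gaussian_nu unfolding gaussian_vec_def by auto

lemma measurable_output_proc[measurable]:
  "output_proc A B G C x0 u w nu t \<in> borel_measurable M"
proof -
  have [measurable]: "state_traj A B G x0 u w t \<in> borel_measurable M" for t
    by (induction t) simp_all
  show ?thesis unfolding output_proc_def by measurable
qed

lemmas w_mean = gaussian_vec_moments(1,2)[OF gaussian_w]

lemmas nu_mean = gaussian_vec_moments(1,2)[OF gaussian_nu, simplified]

lemma noise_family_indep_mult:
  fixes f g :: "(real^'l) \<times> (real^'p) \<Rightarrow> real"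
  assumes "i \<noteq> j" "f \<in> borel_measurable borel" "g \<in> borel_measurable borel"
    "integrable M (\<lambda>\<omega>. f (noise_family i \<omega>))" "integrable M (\<lambda>\<omega>. g (noise_family j \<omega>))"
  shows "integrable M (\<lambda>\<omega>. f (noise_family i \<omega>) * g (noise_family j \<omega>))"
    and "(\<integral>\<omega>. f (noise_family i \<omega>) * g (noise_family j \<omega>) \<partial>M) =
      (\<integral>\<omega>. f (noise_family i \<omega>) \<partial>M) * (\<integral>\<omega>. g (noise_family j \<omega>) \<partial>M)"
  using indep_vars_integral_mult[OF indep_noise_family assms] by auto

lemma w_cross_integrable: "integrable M (\<lambda>\<omega>. (a \<bullet> w r \<omega>) * (b \<bullet> w q \<omega>))"
  using gaussian_vec_cross_moment(1)[OF gaussian_w, of a r b] w_mean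
    noise_family_indep_mult(1)[of "Inl r" "Inl q" "\<lambda>z. a \<bullet> fst z" "\<lambda>z. b \<bullet> fst z",
      OF _ borel_measurable_inner_fst borel_measurable_inner_fst]
  by (cases "r = q") (simp_all add: noise_family_def)

lemma w_cross_moment:
  "(\<integral>\<omega>. (a \<bullet> w r \<omega>) * (b \<bullet> w q \<omega>) \<partial>M) = (a \<bullet> mu) * (b \<bullet> mu) + (if r = q then a \<bullet> b else 0)"
  using gaussian_vec_cross_moment(2)[OF gaussian_w, of a r b] w_mean
    noise_family_indep_mult(2)[of "Inl r" "Inl q" "\<lambda>z. a \<bullet> fst z" "\<lambda>z. b \<bullet> fst z",
      OF _ borel_measurable_inner_fst borel_measurable_inner_fst]
  by (cases "r = q") (simp_all add: noise_family_def matrix_vector_mul_lid)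

lemma nu_cross_integrable: "integrable M (\<lambda>\<omega>. (a \<bullet> nu t \<omega>) * (b \<bullet> nu s \<omega>))"
  using gaussian_vec_cross_moment(1)[OF gaussian_nu, of a t b] nu_mean
    noise_family_indep_mult(1)[of "Inr t" "Inr s" "\<lambda>z. a \<bullet> snd z" "\<lambda>z. b \<bullet> snd z",
      OF _ borel_measurable_inner_snd borel_measurable_inner_snd]
  by (cases "t = s") (simp_all add: noise_family_def)

lemma nu_cross_moment:
  "(\<integral>\<omega>. (a \<bullet> nu t \<omega>) * (b \<bullet> nu s \<omega>) \<partial>M) = (if t = s then a \<bullet> (Psi *v b) else 0)"
  using gaussian_vec_cross_moment(2)[OF gaussian_nu, of a t b] nu_mean
    noise_family_indep_mult(2)[of "Inr t" "Inr s" "\<lambda>z. a \<bullet> snd z" "\<lambda>z. b \<bullet> snd z",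
      OF _ borel_measurable_inner_snd borel_measurable_inner_snd]
  by (cases "t = s") (simp_all add: noise_family_def)

lemma w_nu_cross_moment:
  shows "integrable M (\<lambda>\<omega>. (a \<bullet> w r \<omega>) * (b \<bullet> nu s \<omega>))"
    and "(\<integral>\<omega>. (a \<bullet> w r \<omega>) * (b \<bullet> nu s \<omega>) \<partial>M) = 0"
  using noise_family_indep_mult[of "Inl r" "Inr s" "\<lambda>z. a \<bullet> fst z" "\<lambda>z. b \<bullet> snd z",
      OF _ borel_measurable_inner_fst borel_measurable_inner_snd] w_mean nu_mean
  by (simp_all add: noise_family_def)

lemma inner_output_proc:
  "a \<bullet> output_proc A B G C 0 u w nu t \<omega> =
     a \<bullet> (\<Sum>r<t. markov_param C A B (t - Suc r) *v u r) +
     (\<Sum>r<t. (a v* markov_param C A G (t - Suc r)) \<bullet> w r \<omega>) + a \<bullet> nu t \<omega>"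
  unfolding output_proc_closed_form
  by (simp add: inner_add_right inner_sum_right sum.distrib dot_lmul_matrix)

lemma output_mean_integral:
  "(\<integral>\<omega>. a \<bullet> output_proc A B G C 0 u w nu t \<omega> \<partial>M) = a \<bullet> output_mean A B G C mu u t"
proof -
  have "(\<integral>\<omega>. (\<Sum>r<t. (a v* markov_param C A G (t - Suc r)) \<bullet> w r \<omega>) \<partial>M)
      = (\<Sum>r<t. (a v* markov_param C A G (t - Suc r)) \<bullet> mu)"
    using w_mean by (simp add: Bochner_Integration.integral_sum)
  also have "\<dots> = (\<Sum>r<t. a \<bullet> (markov_param C A G (t - Suc r) *v mu))"
    by (simp add: dot_lmul_matrix)
  finally show ?thesis
    unfolding inner_output_proc output_mean_def
    using w_mean nu_mean
    by (simp add: inner_add_right inner_sum_right sum.distrib prob_space)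
qed

lemma noise_sums_cross_moment:
  "(\<integral>\<omega>. ((\<Sum>r<t. \<alpha> r \<bullet> w r \<omega>) + a \<bullet> nu t \<omega>) * ((\<Sum>q<s. \<beta> q \<bullet> w q \<omega>) + b \<bullet> nu s \<omega>) \<partial>M) =
    (\<Sum>r<t. \<alpha> r \<bullet> mu) * (\<Sum>q<s. \<beta> q \<bullet> mu) + (\<Sum>r<min t s. \<alpha> r \<bullet> \<beta> r) +
    (if t = s then a \<bullet> (Psi *v b) else 0)"
proof -
  define WW where "WW \<omega> = (\<Sum>r<t. \<Sum>q<s. (\<alpha> r \<bullet> w r \<omega>) * (\<beta> q \<bullet> w q \<omega>))" for \<omega>
  define WN where "WN \<omega> = (\<Sum>r<t. (\<alpha> r \<bullet> w r \<omega>) * (b \<bullet> nu s \<omega>)) +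
    (\<Sum>q<s. (\<beta> q \<bullet> w q \<omega>) * (a \<bullet> nu t \<omega>))" for \<omega>
  define NN where "NN \<omega> = (a \<bullet> nu t \<omega>) * (b \<bullet> nu s \<omega>)" for \<omega>
  have expand: "((\<Sum>r<t. \<alpha> r \<bullet> w r \<omega>) + a \<bullet> nu t \<omega>) * ((\<Sum>q<s. \<beta> q \<bullet> w q \<omega>) + b \<bullet> nu s \<omega>)
      = WW \<omega> + WN \<omega> + NN \<omega>" for \<omega>
  proof -
    have "(X + x) * (Y + y) = X * Y + (X * y + Y * x) + x * y" for X Y x y :: real
      by (simp add: algebra_simps)
    then show ?thesis
      unfolding WW_def WN_def NN_def by (simp only: sum_product) (simp only: sum_distrib_right)
  qed
  have int_WW: "integrable M WW" and int_WN: "integrable M WN" and int_NN: "integrable M NN"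
    unfolding WW_def WN_def NN_def
    using w_cross_integrable nu_cross_integrable w_nu_cross_moment(1)
    by auto
  have "integral\<^sup>L M WW = (\<Sum>r<t. \<Sum>q<s. (\<alpha> r \<bullet> mu) * (\<beta> q \<bullet> mu) + (if r = q then \<alpha> r \<bullet> \<beta> r else 0))"
    unfolding WW_def using w_cross_integrable
    by (simp add: Bochner_Integration.integral_sum w_cross_moment cong: if_cong)
  also have "\<dots> = (\<Sum>r<t. \<alpha> r \<bullet> mu) * (\<Sum>q<s. \<beta> q \<bullet> mu) + (\<Sum>r<min t s. \<alpha> r \<bullet> \<beta> r)"
    by (simp add: sum.distrib sum_lessThan_if_less sum_product)
  finally have "integral\<^sup>L M WW = \<dots>" .
  moreover have "integral\<^sup>L M WN = 0"
    unfolding WN_def using w_nu_cross_moment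
    by (simp add: Bochner_Integration.integral_sum)
  moreover have "integral\<^sup>L M NN = (if t = s then a \<bullet> (Psi *v b) else 0)"
    unfolding NN_def by (rule nu_cross_moment)
  ultimately show ?thesis
    unfolding expand using int_WW int_WN int_NN by simp
qed

lemma output_cross_moment:
  "(\<integral>\<omega>. (a \<bullet> output_proc A B G C 0 (\<lambda>_. 0) w nu t \<omega>) * (b \<bullet> output_proc A B G C 0 (\<lambda>_. 0) w nu s \<omega>) \<partial>M) =
     (a \<bullet> output_mean A B G C mu (\<lambda>_. 0) t) * (b \<bullet> output_mean A B G C mu (\<lambda>_. 0) s) +
     a \<bullet> (output_cov A G C Psi t s *v b)"
proof -
  have mean: "a \<bullet> output_mean A B G C mu (\<lambda>_. 0) t = (\<Sum>r<t. (a v* markov_param C A G (t - Suc r)) \<bullet> mu)"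
    for a t
    by (simp add: output_mean_def inner_sum_right dot_lmul_matrix)
  have cov: "a \<bullet> (output_cov A G C Psi t s *v b) =
      (\<Sum>r<min t s. (a v* markov_param C A G (t - Suc r)) \<bullet> (b v* markov_param C A G (s - Suc r))) +
      (if t = s then a \<bullet> (Psi *v b) else 0)"
    by (simp add: output_cov_def matrix_vector_mult_add_rdistrib sum_matrix_vector_mult inner_add_right
        inner_sum_right inner_vector_matrix_mult)
  show ?thesis
    unfolding inner_output_proc mean cov using noise_sums_cross_moment by simp
qed

end

section \<open>Stochastically equivalent outputs\<close>

lemma stoch_equiv_integral_eq:
  fixes f :: "(nat \<Rightarrow> 'c::second_countable_topology) \<Rightarrow> real"
  assumes equiv: "stoch_equiv M1 Y1 M2 Y2"
    and "\<And>t. Y1 t \<in> borel_measurable M1" "\<And>t. Y2 t \<in> borel_measurable M2"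
    and f: "f \<in> borel_measurable (Pi\<^sub>M {..<k} (\<lambda>_. borel))"
  shows "(\<integral>\<omega>. f (restrict (\<lambda>j. Y1 (ts j) \<omega>) {..<k}) \<partial>M1) =
    (\<integral>\<omega>. f (restrict (\<lambda>j. Y2 (ts j) \<omega>) {..<k}) \<partial>M2)"
proof -
  have "(\<lambda>\<omega>. restrict (\<lambda>j. Y1 (ts j) \<omega>) {..<k}) \<in> measurable M1 (Pi\<^sub>M {..<k} (\<lambda>_. borel))"
    and "(\<lambda>\<omega>. restrict (\<lambda>j. Y2 (ts j) \<omega>) {..<k}) \<in> measurable M2 (Pi\<^sub>M {..<k} (\<lambda>_. borel))"
    using assms(2,3) by (auto intro!: measurable_restrict)
  then show ?thesis
    using equiv integral_distr[OF _ f] unfolding stoch_equiv_def by metis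
qed

lemma stoch_equiv_mean_eq:
  fixes Y1 :: "nat \<Rightarrow> 'a \<Rightarrow> 'c::{euclidean_space, second_countable_topology}"
  assumes "stoch_equiv M1 Y1 M2 Y2" "\<And>t. Y1 t \<in> borel_measurable M1" "\<And>t. Y2 t \<in> borel_measurable M2"
  shows "(\<integral>\<omega>. a \<bullet> Y1 t \<omega> \<partial>M1) = (\<integral>\<omega>. a \<bullet> Y2 t \<omega> \<partial>M2)"
  using stoch_equiv_integral_eq[OF assms, of "\<lambda>g. a \<bullet> g 0" "Suc 0" "\<lambda>_. t"] by simp

lemma stoch_equiv_cross_moment_eq:
  fixes Y1 :: "nat \<Rightarrow> 'a \<Rightarrow> 'c::{euclidean_space, second_countable_topology}"
  assumes "stoch_equiv M1 Y1 M2 Y2" "\<And>t. Y1 t \<in> borel_measurable M1" "\<And>t. Y2 t \<in> borel_measurable M2"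
  shows "(\<integral>\<omega>. (a \<bullet> Y1 t \<omega>) * (b \<bullet> Y1 s \<omega>) \<partial>M1) = (\<integral>\<omega>. (a \<bullet> Y2 t \<omega>) * (b \<bullet> Y2 s \<omega>) \<partial>M2)"
  using stoch_equiv_integral_eq[OF assms, of "\<lambda>g. (a \<bullet> g 0) * (b \<bullet> g 1)" 2 "\<lambda>j. if j = 0 then t else s"]
  by simp

locale equivalent_zero_state_outputs =
  S1: gaussian_noise M1 w1 mu1 nu1 Psi1 + S2: gaussian_noise M2 w2 mu2 nu2 Psi2
  for M1 :: "'a measure" and w1 :: "nat \<Rightarrow> 'a \<Rightarrow> real^'l1" and mu1
    and nu1 :: "nat \<Rightarrow> 'a \<Rightarrow> real^'p" and Psi1
    and M2 :: "'b measure" and w2 :: "nat \<Rightarrow> 'b \<Rightarrow> real^'l2" and mu2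
    and nu2 :: "nat \<Rightarrow> 'b \<Rightarrow> real^'p" and Psi2 +
  fixes A1 :: "real^'n1^'n1" and B1 :: "real^'m^'n1" and G1 :: "real^'l1^'n1" and C1 :: "real^'n1^'p"
    and A2 :: "real^'n2^'n2" and B2 :: "real^'m^'n2" and G2 :: "real^'l2^'n2" and C2 :: "real^'n2^'p"
  assumes equiv: "\<And>u. stoch_equiv M1 (output_proc A1 B1 G1 C1 0 u w1 nu1)
                                   M2 (output_proc A2 B2 G2 C2 0 u w2 nu2)"
begin

lemma output_means_eq: "output_mean A1 B1 G1 C1 mu1 u t = output_mean A2 B2 G2 C2 mu2 u t"
proof -
  have "a \<bullet> output_mean A1 B1 G1 C1 mu1 u t = a \<bullet> output_mean A2 B2 G2 C2 mu2 u t" for a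
    using stoch_equiv_mean_eq[OF equiv[of u] S1.measurable_output_proc S2.measurable_output_proc, of a t]
    unfolding S1.output_mean_integral S2.output_mean_integral .
  then show ?thesis
    using vector_eq_ldot by blast
qed

lemma output_covs_eq: "output_cov A1 G1 C1 Psi1 t s = output_cov A2 G2 C2 Psi2 t s"
proof (rule matrix_eq_inner)
  fix a b
  show "a \<bullet> (output_cov A1 G1 C1 Psi1 t s *v b) = a \<bullet> (output_cov A2 G2 C2 Psi2 t s *v b)"
    using stoch_equiv_cross_moment_eq[OF equiv[of "\<lambda>_. 0"] S1.measurable_output_proc
        S2.measurable_output_proc, of a t b s]
    unfolding S1.output_cross_moment S2.output_cross_moment output_means_eq by simp
qed

end

lemma obs_ker_iff:
  "(x1, x2) \<in> obs_ker C1 A1 C2 A2 k \<longleftrightarrow> (\<forall>j<k. C1 *v (mat_pow A1 j *v x1) = C2 *v (mat_pow A2 j *v x2))"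
  by (auto simp: obs_ker_def obs_map_def fun_eq_iff)

theorem proposition4:
  fixes A1 :: "real^'n1^'n1" and B1 :: "real^'m^'n1" and G1 :: "real^'l1^'n1"
    and C1 :: "real^'n1^'p" and mu1 :: "real^'l1" and Psi1 :: "real^'p^'p"
    and M1 :: "'a measure" and w1 :: "nat \<Rightarrow> 'a \<Rightarrow> real^'l1" and nu1 :: "nat \<Rightarrow> 'a \<Rightarrow> real^'p"
    and A2 :: "real^'n2^'n2" and B2 :: "real^'m^'n2" and G2 :: "real^'l2^'n2"
    and C2 :: "real^'n2^'p" and mu2 :: "real^'l2" and Psi2 :: "real^'p^'p"
    and M2 :: "'b measure" and w2 :: "nat \<Rightarrow> 'b \<Rightarrow> real^'l2" and nu2 :: "nat \<Rightarrow> 'b \<Rightarrow> real^'p"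
    and R :: "((real^'n1) \<times> (real^'n2)) set"
  assumes noise1: "noise_ok M1 w1 mu1 nu1 Psi1"
    and noise2: "noise_ok M2 w2 mu2 nu2 Psi2"
    and R_subspace: "subspace R"
    and equiv: "\<forall>(x1, x2) \<in> R. \<forall>u :: nat \<Rightarrow> real^'m.
                  stoch_equiv M1 (output_proc A1 B1 G1 C1 x1 u w1 nu1)
                              M2 (output_proc A2 B2 G2 C2 x2 u w2 nu2)"
  shows "range (\<lambda>v. (B1 *v v, B2 *v v))
           \<subseteq> obs_ker C1 A1 C2 A2 (CARD('n1) + CARD('n2)) \<and>
         range (\<lambda>c::real. (c *\<^sub>R (G1 *v mu1), c *\<^sub>R (G2 *v mu2)))
           \<subseteq> obs_ker C1 A1 C2 A2 (CARD('n1) + CARD('n2)) \<and>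
         (\<exists>H :: real^'l2^'l1. range (\<lambda>v. (G1 *v (H *v v), G2 *v v))
           \<subseteq> obs_ker C1 A1 C2 A2 (CARD('n1) + CARD('n2)))"
proof -
  have "(0, 0) \<in> R"
    using subspace_0[OF R_subspace] by (simp add: zero_prod_def)
  then interpret equivalent_zero_state_outputs M1 w1 mu1 nu1 Psi1 M2 w2 mu2 nu2 Psi2
      A1 B1 G1 C1 A2 B2 G2 C2
    using equiv noise1 noise2 by unfold_locales auto
  note markov_eqs = markov_params_eq_if_output_means_eq[OF output_means_eq]
  \<comment> \<open>the finite index type required by \<open>gram_eq_imp_right_factor\<close>\<close>
  obtain idx :: "'n1 + 'n2 \<Rightarrow> nat" where idx: "bij_betw idx UNIV {..<CARD('n1) + CARD('n2)}"
    using ex_bij_betw_finite_nat[of "UNIV :: ('n1 + 'n2) set"]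
    by (auto simp: card_UNIV_sum atLeast0LessThan)
  obtain H where H: "\<And>k. markov_param C1 A1 G1 (idx k) ** H = markov_param C2 A2 G2 (idx k)"
    using gram_eq_imp_right_factor[of "\<lambda>k. markov_param C1 A1 G1 (idx k)"
        "\<lambda>k. markov_param C2 A2 G2 (idx k)"] markov_gram_eq_if_output_covs_eq[OF output_covs_eq]
    by blast
  have "markov_param C1 A1 G1 j ** H = markov_param C2 A2 G2 j" if "j < CARD('n1) + CARD('n2)" for j
    using H idx that by (metis bij_betw_iff_bijections lessThan_iff)
  then show ?thesis
    using markov_eqs
    by (intro conjI exI[of _ H])
      (auto simp: obs_ker_iff markov_param_def matrix_vector_mul_assoc matrix_mul_assoc
        matrix_vector_mult_scaleR)
qed

end
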